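(* Let an FCA with state set $S$, neighborhood $m=l+1+r$, local rule $f$ and boundary type $b\in\{\text{null},\text{periodic}\}$ be given, and let $G$ be its reversibility graph. If $N$ is a negative vertex of $G$ with value $k\ge1$ and some circuit of length $1$ (a loop) passes through $N$, then the FCA is not $n$-cell-reversible for every $n\ge k$.
   Context: A one-dimensional finite cellular automaton (FCA) is given by a state set $S=\{0,1,\dots,s-1\}$, integers $l,r\ge 0$ with neighborhood size $m=l+1+r\ge 2$, a local rule $f:S^m\to S$, and a boundary type $b\in\{\text{null},\text{periodic}\}$. For $n\ge 1$ the global map $\tau_n:S^n\to S^n$ sends $(x_0,\dots,x_{n-1})$ to $(y_0,\dots,y_{n-1})$ with $y_i=f(x_{i-l},\dots,x_{i+r})$, where for the null boundary $x_j=0$ whenever $j<0$ or $j>n-1$, and for the periodic boundary indices are taken modulo $n$. The FCA is $n$-cell-reversible if $\tau_n$ is a bijection (equivalently, since $S^n$ is finite, surjective). Reversibility graph (RG). Null boundary: vertices are subsets of $S^{m-1}$; the root is $N_0=\{(a_1,\dots,a_{m-1})\in S^{m-1}: a_1=\dots=a_l=0\}$; the acceptance set is $R=\{(a_1,\dots,a_{m-1})\in S^{m-1}: a_{m-r}=\dots=a_{m-1}=0\}$ (so $R=S^{m-1}$ if $r=0$); for a subset $N$ and $c\in S$, $\delta(N,c)=\{(a_1,\dots,a_{m-1})\in S^{m-1}:\exists a_0\in S,\ (a_0,\dots,a_{m-2})\in N,\ f(a_0,a_1,\dots,a_{m-1})=c\}$. Periodic boundary: vertices are subsets of $S^{m-1}\times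 S^{m-1}$; the root and the acceptance set are $N_0=R=\{(a,a):a\in S^{m-1}\}$; $\delta(N,c)=\{((a_1,\dots,a_{m-1}),(b_1,\dots,b_{m-1})):\exists b_0\in S,\ ((a_1,\dots,a_{m-1}),(b_0,\dots,b_{m-2}))\in N,\ f(b_0,\dots,b_{m-1})=c\}$. In both cases the RG is the directed graph whose vertex set consists of all subsets obtainable from $N_0$ by repeatedly applying $\delta$ (including $N_0$; equal subsets are the same vertex; the empty set may occur), with, for each vertex $N$ and each $c\in S$, an edge labelled $c$ from $N$ to $\delta(N,c)$. The value of a vertex $N$ is the length of a shortest directed path from $N_0$ to $N$. A vertex $N$ is negative if $N\cap R=\emptyset$. A circuit is an elementary directed cycle of the RG (a closed directed path with no repeated vertex other than its start = end; a loop is a circuit of length $1$); its length is its number of edges, and it passes through $N$ if $N$ is one of its vertices. *)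

theory Defs
  imports Main
begin

datatype boundary = Null | Periodic

definition states :: "nat \<Rightarrow> nat set" where
  "states s = {0..<s}"

definition words :: "nat \<Rightarrow> nat \<Rightarrow> nat list set" where
  "words s k = {xs. length xs = k \<and> set xs \<subseteq> states s}"

definition cell :: "boundary \<Rightarrow> nat list \<Rightarrow> int \<Rightarrow> nat" where
  "cell b xs j = (case b of
      Null \<Rightarrow> (if 0 \<le> j \<and> j < int (length xs) then xs ! nat j else 0)
    | Periodic \<Rightarrow> xs ! nat (j mod int (length xs)))"

definition gmap :: "boundary \<Rightarrow> nat \<Rightarrow> nat \<Rightarrow> (nat list \<Rightarrow> nat) \<Rightarrow> nat list \<Rightarrow> nat list" where
  "gmap b l r f xs =
     map (\<lambda>i. f (map (\<lambda>d. cell b xs (int i - int l + int d)) [0..<l + 1 + r]))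
         [0..<length xs]"

definition n_cell_reversible ::
  "boundary \<Rightarrow> nat \<Rightarrow> nat \<Rightarrow> nat \<Rightarrow> (nat list \<Rightarrow> nat) \<Rightarrow> nat \<Rightarrow> bool" where
  "n_cell_reversible b s l r f n = bij_betw (gmap b l r f) (words s n) (words s n)"

definition rg_value :: "'v \<Rightarrow> ('v \<Rightarrow> nat \<Rightarrow> 'v) \<Rightarrow> nat set \<Rightarrow> 'v \<Rightarrow> nat \<Rightarrow> bool" where
  "rg_value N0 \<delta> S N k \<longleftrightarrow>
     (\<exists>w. set w \<subseteq> S \<and> length w = k \<and> foldl \<delta> N0 w = N) \<and>
     (\<forall>w. set w \<subseteq> S \<and> foldl \<delta> N0 w = N \<longrightarrow> k \<le> length w)"

definition neg_loop_vertex ::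
  "'a set \<Rightarrow> 'a set \<Rightarrow> ('a set \<Rightarrow> nat \<Rightarrow> 'a set) \<Rightarrow> nat set \<Rightarrow> 'a set \<Rightarrow> nat \<Rightarrow> bool" where
  "neg_loop_vertex N0 R \<delta> S N k \<longleftrightarrow>
     rg_value N0 \<delta> S N k \<and> N \<inter> R = {} \<and> (\<exists>c\<in>S. \<delta> N c = N)"

definition rg_root_null :: "nat \<Rightarrow> nat \<Rightarrow> nat \<Rightarrow> nat list set" where
  "rg_root_null s l r = {a \<in> words s (l + r). \<forall>i<l. a ! i = 0}"

definition rg_acc_null :: "nat \<Rightarrow> nat \<Rightarrow> nat \<Rightarrow> nat list set" where
  "rg_acc_null s l r = {a \<in> words s (l + r). \<forall>i<l + r. l \<le> i \<longrightarrow> a ! i = 0}"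

definition rg_delta_null ::
  "nat \<Rightarrow> nat \<Rightarrow> nat \<Rightarrow> (nat list \<Rightarrow> nat) \<Rightarrow> nat list set \<Rightarrow> nat \<Rightarrow> nat list set" where
  "rg_delta_null s l r f N c =
     {a \<in> words s (l + r). \<exists>a0\<in>states s. (a0 # butlast a) \<in> N \<and> f (a0 # a) = c}"

definition rg_root_per :: "nat \<Rightarrow> nat \<Rightarrow> nat \<Rightarrow> (nat list \<times> nat list) set" where
  "rg_root_per s l r = {(a, a) | a. a \<in> words s (l + r)}"

definition rg_delta_per ::
  "nat \<Rightarrow> nat \<Rightarrow> nat \<Rightarrow> (nat list \<Rightarrow> nat) \<Rightarrow> (nat list \<times> nat list) set \<Rightarrow> nat
     \<Rightarrow> (nat list \<times> nat list) set" where
  "rg_delta_per s l r f N c =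
     {(a, b) | a b. a \<in> words s (l + r) \<and> b \<in> words s (l + r) \<and>
        (\<exists>b0\<in>states s. (a, b0 # butlast b) \<in> N \<and> f (b0 # b) = c)}"

end

theory Submission
  imports Defs
begin

text \<open>For a configuration \<open>x\<close> of length \<open>n\<close>, reading \<open>\<tau>\<^sub>n(x)\<close> from the root of the
  reversibility graph keeps the window \<open>x(t - l), \<dots>, x(t + r - 1)\<close> (paired with the initial window in
  the periodic case) inside the vertex reached after \<open>t\<close> letters; after all \<open>n\<close> letters this
  window is accepting. So every word in the image of \<open>\<tau>\<^sub>n\<close> ends in a non-negative vertex.
  On the other hand, a shortest word of length \<open>k\<close> leading to the negative vertex \<open>N\<close>, padded
  with \<open>n - k\<close> copies of the loop label, is a word of length \<open>n\<close> ending in \<open>N\<close>; hence \<open>\<tau>\<^sub>n\<close>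
  is not surjective.\<close>

definition window :: "boundary \<Rightarrow> nat list \<Rightarrow> int \<Rightarrow> nat \<Rightarrow> nat list" where
  "window b xs t L = map (\<lambda>d. cell b xs (t + int d)) [0..<L]"

lemma length_window [simp]: "length (window b xs t L) = L"
  by (simp add: window_def)

lemma nth_window [simp]: "i < L \<Longrightarrow> window b xs t L ! i = cell b xs (t + int i)"
  by (simp add: window_def)

lemma window_Suc: "window b xs t (Suc L) = cell b xs t # window b xs (t + 1) L"
  by (rule nth_equalityI) (auto simp: nth_Cons' algebra_simps)

lemma cell_Cons_butlast_window:
  "L \<ge> 1 \<Longrightarrow> cell b xs t # butlast (window b xs (t + 1) L) = window b xs t L"
  by (rule nth_equalityI) (auto simp: nth_Cons' nth_butlast algebra_simps)

lemma window_Periodic_shift: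
  "window Periodic xs (t + int (length xs)) L = window Periodic xs t L"
proof (rule nth_equalityI)
  fix i
  have "(t + int (length xs) + int i) mod int (length xs) = (t + int i) mod int (length xs)"
    by (metis add.commute add.left_commute mod_add_self2)
  then show "window Periodic xs (t + int (length xs)) L ! i = window Periodic xs t L ! i"
    if "i < length (window Periodic xs (t + int (length xs)) L)"
    using that by (simp add: cell_def)
qed simp

lemma length_gmap [simp]: "length (gmap b l r f xs) = length xs"
  by (simp add: gmap_def)

lemma nth_gmap:
  "i < length xs \<Longrightarrow>
     gmap b l r f xs ! i = f (cell b xs (int i - int l) # window b xs (int i - int l + 1) (l + r))"
proof -
  assume "i < length xs"
  then have "gmap b l r f xs ! i = f (window b xs (int i - int l) (Suc (l + r)))"
    by (simp add: gmap_def window_def)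
  then show ?thesis
    by (simp add: window_Suc)
qed

lemma cell_in_states:
  assumes "xs \<in> words s n" and "n \<ge> 1"
  shows "cell b xs j \<in> states s"
proof (cases b)
  case Null
  have "0 < length xs" "set xs \<subseteq> states s"
    using assms by (auto simp: words_def)
  then have "xs ! 0 \<in> states s"
    by (meson nth_mem subsetD)
  then have "0 \<in> states s"
    by (simp add: states_def)
  with assms Null show ?thesis
    by (auto simp: cell_def words_def subset_iff)
next
  case Periodic
  have "nat (j mod int n) < n"
    using assms by (simp add: nat_less_iff)
  with assms Periodic show ?thesis
    by (auto simp: cell_def words_def subset_iff)
qed

lemma window_in_words:
  "xs \<in> words s n \<Longrightarrow> n \<ge> 1 \<Longrightarrow> window b xs t L \<in> words s L"
  using cell_in_states[of xs s n b] by (auto simp: words_def window_def)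

lemma foldl_take_Suc:
  "t < length ys \<Longrightarrow> foldl \<delta> N (take (Suc t) ys) = \<delta> (foldl \<delta> N (take t ys)) (ys ! t)"
  by (simp add: take_Suc_conv_app_nth)

lemma foldl_replicate_fixpoint: "\<delta> N c = N \<Longrightarrow> foldl \<delta> N (replicate j c) = N"
  by (induction j) auto

lemma rg_null_run_contains_window:
  assumes xs: "xs \<in> words s n" and n: "n \<ge> 1" and lr: "l + r \<ge> 1" and t: "t \<le> n"
  shows "window Null xs (int t - int l) (l + r)
           \<in> foldl (rg_delta_null s l r f) (rg_root_null s l r) (take t (gmap Null l r f xs))"
  using t
proof (induction t)
  case 0
  then show ?case
    using window_in_words[OF xs n] by (auto simp: rg_root_null_def cell_def)
next
  case (Suc t)
  let ?run = "foldl (rg_delta_null s l r f) (rg_root_null s l r) (take t (gmap Null l r f xs))"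
  let ?w = "window Null xs (int t - int l + 1) (l + r)"
  have t: "t < length xs"
    using Suc.prems xs by (simp add: words_def)
  have "cell Null xs (int t - int l) # butlast ?w \<in> ?run"
    using Suc cell_Cons_butlast_window[OF lr, of Null xs "int t - int l"] by simp
  moreover have "f (cell Null xs (int t - int l) # ?w) = gmap Null l r f xs ! t"
    using nth_gmap[OF t] by simp
  ultimately have "?w \<in> rg_delta_null s l r f ?run (gmap Null l r f xs ! t)"
    unfolding rg_delta_null_def
    using window_in_words[OF xs n] cell_in_states[OF xs n] by blast
  then show ?case
    using t by (simp add: foldl_take_Suc algebra_simps)
qed

lemma rg_null_run_accepting:
  assumes xs: "xs \<in> words s n" and n: "n \<ge> 1" and lr: "l + r \<ge> 1"
  shows "foldl (rg_delta_null s l r f) (rg_root_null s l r) (gmap Null l r f xs)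
           \<inter> rg_acc_null s l r \<noteq> {}"
proof -
  have len: "length xs = n"
    using xs by (simp add: words_def)
  have "window Null xs (int n - int l) (l + r)
          \<in> foldl (rg_delta_null s l r f) (rg_root_null s l r) (gmap Null l r f xs)"
    using rg_null_run_contains_window[OF xs n lr order.refl] len by simp
  moreover have "window Null xs (int n - int l) (l + r) \<in> rg_acc_null s l r"
    using window_in_words[OF xs n] len by (auto simp: rg_acc_null_def cell_def)
  ultimately show ?thesis
    by blast
qed

lemma rg_per_run_contains_window:
  assumes xs: "xs \<in> words s n" and n: "n \<ge> 1" and lr: "l + r \<ge> 1" and t: "t \<le> n"
  shows "(window Periodic xs (- int l) (l + r), window Periodic xs (int t - int l) (l + r))
           \<in> foldl (rg_delta_per s l r f) (rg_root_per s l r) (take t (gmap Periodic l r f xs))"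
  using t
proof (induction t)
  case 0
  then show ?case
    using window_in_words[OF xs n] by (simp add: rg_root_per_def)
next
  case (Suc t)
  let ?run = "foldl (rg_delta_per s l r f) (rg_root_per s l r) (take t (gmap Periodic l r f xs))"
  let ?w_init = "window Periodic xs (- int l) (l + r)"
  let ?w = "window Periodic xs (int t - int l + 1) (l + r)"
  have t: "t < length xs"
    using Suc.prems xs by (simp add: words_def)
  have "(?w_init, cell Periodic xs (int t - int l) # butlast ?w) \<in> ?run"
    using Suc cell_Cons_butlast_window[OF lr, of Periodic xs "int t - int l"] by simp
  moreover have "f (cell Periodic xs (int t - int l) # ?w) = gmap Periodic l r f xs ! t"
    using nth_gmap[OF t] by simp
  ultimately have "(?w_init, ?w) \<in> rg_delta_per s l r f ?run (gmap Periodic l r f xs ! t)"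
    unfolding rg_delta_per_def
    using window_in_words[OF xs n] cell_in_states[OF xs n] by blast
  then show ?case
    using t by (simp add: foldl_take_Suc algebra_simps)
qed

lemma rg_per_run_accepting:
  assumes xs: "xs \<in> words s n" and n: "n \<ge> 1" and lr: "l + r \<ge> 1"
  shows "foldl (rg_delta_per s l r f) (rg_root_per s l r) (gmap Periodic l r f xs)
           \<inter> rg_root_per s l r \<noteq> {}"
proof -
  let ?w_init = "window Periodic xs (- int l) (l + r)"
  have len: "length xs = n"
    using xs by (simp add: words_def)
  have "window Periodic xs (int n - int l) (l + r) = ?w_init"
    using window_Periodic_shift[of xs "- int l" "l + r"] len by (simp add: algebra_simps)
  then have "(?w_init, ?w_init) \<in> foldl (rg_delta_per s l r f) (rg_root_per s l r) (gmap Periodic l r f xs)"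
    using rg_per_run_contains_window[OF xs n lr order.refl] len by simp
  moreover have "(?w_init, ?w_init) \<in> rg_root_per s l r"
    using window_in_words[OF xs n] by (simp add: rg_root_per_def)
  ultimately show ?thesis
    by blast
qed

lemma neg_loop_vertex_not_surjective:
  assumes "neg_loop_vertex N0 R \<delta> (states s) N k"
    and accepting: "\<And>xs. xs \<in> A \<Longrightarrow> foldl \<delta> N0 (g xs) \<inter> R \<noteq> {}"
    and "k \<le> n"
  shows "\<not> words s n \<subseteq> g ` A"
proof
  obtain w c where w: "set w \<subseteq> states s" "length w = k" "foldl \<delta> N0 w = N"
    and negative: "N \<inter> R = {}" and loop: "c \<in> states s" "\<delta> N c = N"
    using assms(1) unfolding neg_loop_vertex_def rg_value_def by blast
  define y where "y = w @ replicate (n - k) c"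
  assume "words s n \<subseteq> g ` A"
  moreover have "y \<in> words s n"
    using w loop \<open>k \<le> n\<close> by (auto simp: y_def words_def)
  ultimately obtain xs where "xs \<in> A" "g xs = y"
    by blast
  moreover have "foldl \<delta> N0 y = N"
    using w loop by (simp add: y_def foldl_replicate_fixpoint)
  ultimately show False
    using accepting negative by metis
qed

theorem corollary1:
  fixes b :: boundary and s l r k :: nat and f :: "nat list \<Rightarrow> nat"
  assumes "s \<ge> 1"
    and "l + 1 + r \<ge> 2"
    and "\<forall>xs \<in> words s (l + 1 + r). f xs \<in> states s"
    and "k \<ge> 1"
    and "case b of
           Null \<Rightarrow> (\<exists>N. neg_loop_vertex (rg_root_null s l r) (rg_acc_null s l r)
                             (rg_delta_null s l r f) (states s) N k)
         | Periodic \<Rightarrow> (\<exists>N. neg_loop_vertex (rg_root_per s l r) (rg_root_per s l r)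
                             (rg_delta_per s l r f) (states s) N k)"
  shows "\<forall>n \<ge> k. \<not> n_cell_reversible b s l r f n"
proof (intro allI impI)
  fix n assume "k \<le> n"
  then have n: "n \<ge> 1" and lr: "l + r \<ge> 1"
    using assms(2,4) by simp_all
  have "\<not> words s n \<subseteq> gmap b l r f ` words s n"
  proof (cases b)
    case Null
    with assms(5) obtain N where "neg_loop_vertex (rg_root_null s l r) (rg_acc_null s l r)
                                    (rg_delta_null s l r f) (states s) N k"
      by auto
    then show ?thesis
      unfolding Null
      by (rule neg_loop_vertex_not_surjective[OF _ rg_null_run_accepting[OF _ n lr] \<open>k \<le> n\<close>])
  next
    case Periodic
    with assms(5) obtain N where "neg_loop_vertex (rg_root_per s l r) (rg_root_per s l r)
                                    (rg_delta_per s l r f) (states s) N k"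
      by auto
    then show ?thesis
      unfolding Periodic
      by (rule neg_loop_vertex_not_surjective[OF _ rg_per_run_accepting[OF _ n lr] \<open>k \<le> n\<close>])
  qed
  then show "\<not> n_cell_reversible b s l r f n"
    by (auto simp: n_cell_reversible_def bij_betw_def)
qed

end
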